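(* Let $k_{ON},k_{OFF},k_I,\alpha_{p_1},\alpha_{p_2},\gamma_{p_1},\gamma_{m_2},\alpha_{m_2,I},\beta_{m_2,A},T_c>0$, $v_b>1$, $n\ge 1$, and set $a_1=k_{ON}$, $a_3=k_{ON}+k_{OFF}$, $a_4=k_I$, $a_5=\alpha_{p_1}$, $a_6=\gamma_{p_1}$, $a_7=\alpha_{m_2,I}$, $a_8=\gamma_{m_2}+\alpha_{p_1}+\alpha_{p_2}$, $a_9=\beta_{m_2,A}/v_b$, $a_{10}=v_b/T_c^n$, $a_{11}=1/T_c^n$. Consider the quasi-steady-state system \[ \begin{aligned} x' &= a_1 + (a_4-a_1)y - \Big(a_3 + a_9\frac{1+a_{10}v^n}{1+a_{11}v^n}\Big)x,\\ y' &= a_9\frac{1+a_{10}v^n}{1+a_{11}v^n}x - a_4 y,\\ v' &= a_5\frac{a_7}{a_8}x - a_6 v. \end{aligned} \] Then its positive steady state $(x^*,y^*,v^* )$ (all components positive) is locally asymptotically stable.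
   Context: Here $x=\mathrm{LTR}_I$, $y=\mathrm{LTR}_A$, $v=\mathrm{Tat}$ in a model of HIV-1 transcription (with $\mathrm{LTR}_R=1-x-y$), obtained by replacing $\mathrm{env}_I$ with its quasi-steady-state value $\frac{a_7}{a_8}x$. *)

theory Defs
  imports "HOL-Analysis.Analysis"
begin

definition ode_solution_on :: "('a::real_normed_vector \<Rightarrow> 'a) \<Rightarrow> (real \<Rightarrow> 'a) \<Rightarrow> real set \<Rightarrow> bool" where
  "ode_solution_on f \<phi> I \<longleftrightarrow> (\<forall>t\<in>I. (\<phi> has_vector_derivative f (\<phi> t)) (at t within I))"

definition lyapunov_stable :: "('a::real_normed_vector \<Rightarrow> 'a) \<Rightarrow> 'a \<Rightarrow> bool" where
  "lyapunov_stable f p \<longleftrightarrow>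
     (\<forall>\<epsilon>>0. \<exists>\<delta>>0. \<forall>\<phi> T. ode_solution_on f \<phi> {0..<T} \<and> 0 < T \<and> dist (\<phi> 0) p < \<delta>
          \<longrightarrow> (\<forall>t\<in>{0..<T}. dist (\<phi> t) p < \<epsilon>))"

definition locally_attractive :: "('a::real_normed_vector \<Rightarrow> 'a) \<Rightarrow> 'a \<Rightarrow> bool" where
  "locally_attractive f p \<longleftrightarrow>
     (\<exists>\<eta>>0. \<forall>z0. dist z0 p < \<eta> \<longrightarrow>
        (\<exists>\<phi>. ode_solution_on f \<phi> {0..} \<and> \<phi> 0 = z0) \<and>
        (\<forall>\<phi>. ode_solution_on f \<phi> {0..} \<and> \<phi> 0 = z0 \<longrightarrow> (\<phi> \<longlongrightarrow> p) at_top))"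

definition locally_asymptotically_stable :: "('a::real_normed_vector \<Rightarrow> 'a) \<Rightarrow> 'a \<Rightarrow> bool" where
  "locally_asymptotically_stable f p \<longleftrightarrow>
     f p = 0 \<and> lyapunov_stable f p \<and> locally_attractive f p"

definition hiv_field ::
  "real \<Rightarrow> real \<Rightarrow> real \<Rightarrow> real \<Rightarrow> real \<Rightarrow> real \<Rightarrow> real \<Rightarrow> real \<Rightarrow> real \<Rightarrow> real \<Rightarrow> nat
   \<Rightarrow> real \<times> real \<times> real \<Rightarrow> real \<times> real \<times> real" where
  "hiv_field a1 a3 a4 a5 a6 a7 a8 a9 a10 a11 n =
     (\<lambda>(x, y, v).
        let h = a9 * (1 + a10 * v ^ n) / (1 + a11 * v ^ n) in
        (a1 + (a4 - a1) * y - (a3 + h) * x,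
         h * x - a4 * y,
         a5 * (a7 / a8) * x - a6 * v))"

end

theory Submission
  imports Defs
begin

(* Lyapunov's direct method. Write X = x - xs, W = (x - xs) + (y - ys), Z = v - vs and take
   V = X^2 + alpha W^2 + beta Z^2. Along solutions W' = -a1 W - (a3 - a1) X does not involve v, and
   for a suitable alpha the (X, W) part of V' is a negative definite quadratic form, even after
   adding the damping term -h(v) X^2 contributed by the Hill function h. The remaining X Z term has
   coefficient beta a5 a7/a8 - xs G(v), where G is the divided difference of h at vs; choosing beta to
   make it vanish at v = vs, it is small near the equilibrium and is absorbed, so V' <= -kappa V there.
   As V is comparable to the squared distance to the equilibrium, solutions starting nearby stay
   nearby and converge exponentially. Solutions exist for all time because they never leave the
   region where the field agrees with a globally Lipschitz extension of itself, to which Picard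
   iteration applies. *)

section \<open>Global solutions of globally Lipschitz equations\<close>

definition picard_integral :: "('a::euclidean_space \<Rightarrow> 'a) \<Rightarrow> 'a \<Rightarrow> (real \<Rightarrow> 'a) \<Rightarrow> real \<Rightarrow> 'a" where
  "picard_integral g z0 \<psi> t = z0 + integral {0..t} (\<lambda>s. g (\<psi> s))"

lemma has_vector_derivative_picard_integral:
  assumes "continuous_on UNIV g" "continuous_on {0..N} \<psi>" "t \<in> {0..N}"
  shows "(picard_integral g z0 \<psi> has_vector_derivative g (\<psi> t)) (at t within {0..N})"
proof -
  have "continuous_on {0..N} (\<lambda>s. g (\<psi> s))"
    using assms by (auto intro: continuous_on_compose2[of UNIV g])
  from integral_has_vector_derivative[OF this assms(3)] show ?thesis
    unfolding picard_integral_def by (auto intro!: derivative_eq_intros)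
qed

lemma continuous_on_picard_integral:
  assumes "continuous_on UNIV g" "continuous_on {0..N} \<psi>"
  shows "continuous_on {0..N} (picard_integral g z0 \<psi>)"
  unfolding continuous_on_eq_continuous_within
  using has_vector_derivative_picard_integral[OF assms] has_vector_derivative_continuous by blast

definition picard_step :: "('a::euclidean_space \<Rightarrow> 'a) \<Rightarrow> 'a \<Rightarrow> real \<Rightarrow> (real \<Rightarrow>\<^sub>C 'a) \<Rightarrow> (real \<Rightarrow>\<^sub>C 'a)" where
  "picard_step g z0 N \<psi> = Bcontfun (\<lambda>t. picard_integral g z0 \<psi> (clamp 0 N t))"

lemma picard_step_apply:
  assumes "continuous_on UNIV g"
  shows "picard_step g z0 N \<psi> t = picard_integral g z0 \<psi> (clamp 0 N t)"
proof -
  have "continuous_on (cbox 0 N) (picard_integral g z0 \<psi>)"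
    using continuous_on_picard_integral[OF assms] by (simp add: cbox_interval)
  then obtain h :: "real \<Rightarrow>\<^sub>C 'a" where h: "\<And>t. h t = picard_integral g z0 \<psi> (clamp 0 N t)"
    by (metis continuous_on_cbox_bcontfunE)
  then have "(\<lambda>t. picard_integral g z0 \<psi> (clamp 0 N t)) = apply_bcontfun h"
    by auto
  then have "picard_step g z0 N \<psi> = h"
    unfolding picard_step_def by (simp add: apply_bcontfun_inverse)
  with h show ?thesis
    by simp
qed

lemma clamp_real_in_interval: "0 \<le> N \<Longrightarrow> clamp 0 N (t::real) \<in> {0..N}"
  using clamp_in_interval[of 0 N t] by (simp add: cbox_interval)

lemma clamp_real_eq: "t \<in> {0..N} \<Longrightarrow> clamp 0 N (t::real) = t"
  using clamp_cancel_cbox[of t 0 N] by (simp add: cbox_interval)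

lemma integral_exponential_series_term:
  fixes L t :: real
  assumes "0 \<le> t"
  shows "integral {0..t} (\<lambda>s. L * (L * s) ^ k / fact k) = (L * t) ^ Suc k / fact (Suc k)"
proof -
  have "((\<lambda>s. L * (L * s) ^ k / fact k) has_integral
      (L * t) ^ Suc k / fact (Suc k) - (L * 0) ^ Suc k / fact (Suc k)) {0..t}"
  proof (rule fundamental_theorem_of_calculus[OF assms])
    fix s assume "s \<in> {0..t}"
    have "((\<lambda>s. (L * s) ^ Suc k / fact (Suc k)) has_real_derivative
        of_nat (Suc k) * (L * s) ^ k * L / fact (Suc k)) (at s within {0..t})"
      by (intro derivative_eq_intros DERIV_power[where n = "Suc k", simplified]) auto
    then show "((\<lambda>s. (L * s) ^ Suc k / fact (Suc k)) has_vector_derivative L * (L * s) ^ k / fact k)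
        (at s within {0..t})"
      by (simp add: fact_Suc has_real_derivative_iff_has_vector_derivative[symmetric] mult.commute)
  qed
  then show ?thesis
    by (simp only: integral_unique) simp
qed

lemma picard_step_iterate_diff_le:
  assumes lip: "L-lipschitz_on UNIV g" and "0 \<le> N" and t: "t \<in> {0..N}"
  shows "norm (((picard_step g z0 N) ^^ k) \<phi> t - ((picard_step g z0 N) ^^ k) \<psi> t)
           \<le> (L * t) ^ k / fact k * dist \<phi> \<psi>"
  using t
proof (induction k arbitrary: t)
  case 0
  then show ?case
    using dist_bounded[of \<phi> t \<psi>] by (simp add: dist_norm)
next
  case (Suc k)
  define A where "A = ((picard_step g z0 N) ^^ k) \<phi>"
  define B where "B = ((picard_step g z0 N) ^^ k) \<psi>"
  have g: "continuous_on UNIV g"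
    using lip by (rule lipschitz_on_continuous_on)
  have int: "(\<lambda>s. g (A s)) integrable_on {0..t}" "(\<lambda>s. g (B s)) integrable_on {0..t}"
    by (auto intro!: integrable_continuous_real continuous_on_compose2[OF g])
  have "((picard_step g z0 N) ^^ Suc k) \<phi> t = z0 + integral {0..t} (\<lambda>s. g (A s))"
    "((picard_step g z0 N) ^^ Suc k) \<psi> t = z0 + integral {0..t} (\<lambda>s. g (B s))"
    using Suc.prems
    by (simp_all add: picard_step_apply[OF g] clamp_real_eq picard_integral_def A_def B_def)
  then have "norm (((picard_step g z0 N) ^^ Suc k) \<phi> t - ((picard_step g z0 N) ^^ Suc k) \<psi> t)
      = norm (integral {0..t} (\<lambda>s. g (A s) - g (B s)))"
    by (simp add: integral_diff[OF int])
  also have "\<dots> \<le> integral {0..t} (\<lambda>s. L * (L * s) ^ k / fact k * dist \<phi> \<psi>)"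
  proof (rule integral_norm_bound_integral)
    show "(\<lambda>s. g (A s) - g (B s)) integrable_on {0..t}"
      using int by (rule integrable_diff)
    show "(\<lambda>s. L * (L * s) ^ k / fact k * dist \<phi> \<psi>) integrable_on {0..t}"
      by (auto intro!: integrable_continuous_real continuous_intros)
  next
    fix s assume s: "s \<in> {0..t}"
    have "norm (g (A s) - g (B s)) \<le> L * norm (A s - B s)"
      using lipschitz_onD[OF lip] by (simp add: dist_norm)
    also have "\<dots> \<le> L * ((L * s) ^ k / fact k * dist \<phi> \<psi>)"
      using Suc.IH[of s] Suc.prems s lipschitz_on_nonneg[OF lip]
      by (intro mult_left_mono) (auto simp: A_def B_def)
    finally show "norm (g (A s) - g (B s)) \<le> L * (L * s) ^ k / fact k * dist \<phi> \<psi>"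
      by simp
  qed
  also have "\<dots> = integral {0..t} (\<lambda>s. L * (L * s) ^ k / fact k) * dist \<phi> \<psi>"
    by (rule integral_mult_left)
  also have "\<dots> = (L * t) ^ Suc k / fact (Suc k) * dist \<phi> \<psi>"
    using Suc.prems by (subst integral_exponential_series_term) auto
  finally show ?case .
qed

lemma dist_picard_step_iterate_le:
  assumes lip: "L-lipschitz_on UNIV g" and N: "0 \<le> N"
  shows "dist (((picard_step g z0 N) ^^ k) \<phi>) (((picard_step g z0 N) ^^ k) \<psi>)
           \<le> (L * N) ^ k / fact k * dist \<phi> \<psi>"
proof (rule dist_bound)
  fix t
  have g: "continuous_on UNIV g"
    using lip by (rule lipschitz_on_continuous_on)
  have L: "0 \<le> L"
    using lip by (rule lipschitz_on_nonneg)
  show "dist (((picard_step g z0 N) ^^ k) \<phi> t) (((picard_step g z0 N) ^^ k) \<psi> t)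
      \<le> (L * N) ^ k / fact k * dist \<phi> \<psi>"
  proof (cases k)
    case 0
    then show ?thesis
      using dist_bounded[of \<phi> t \<psi>] by simp
  next
    case (Suc j)
    define c where "c = clamp 0 N t"
    have c: "c \<in> {0..N}"
      using clamp_real_in_interval[OF N] by (simp add: c_def)
    have "((picard_step g z0 N) ^^ k) w t = ((picard_step g z0 N) ^^ k) w c" for w
      using Suc c by (simp add: picard_step_apply[OF g] clamp_real_eq c_def)
    then have "dist (((picard_step g z0 N) ^^ k) \<phi> t) (((picard_step g z0 N) ^^ k) \<psi> t)
        = norm (((picard_step g z0 N) ^^ k) \<phi> c - ((picard_step g z0 N) ^^ k) \<psi> c)"
      by (simp add: dist_norm)
    also have "\<dots> \<le> (L * c) ^ k / fact k * dist \<phi> \<psi>"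
      by (rule picard_step_iterate_diff_le[OF lip N c])
    also have "\<dots> \<le> (L * N) ^ k / fact k * dist \<phi> \<psi>"
      using c L by (intro mult_right_mono divide_right_mono power_mono mult_left_mono) auto
    finally show ?thesis .
  qed
qed

lemma exists_power_div_fact_less_one: "\<exists>k. (x::real) ^ k / fact k < 1"
proof -
  have "(\<lambda>k. x ^ k /\<^sub>R fact k) \<longlonglongrightarrow> 0"
    using exp_converges by (intro summable_LIMSEQ_zero sums_summable)
  then have "\<forall>\<^sub>F k in sequentially. x ^ k /\<^sub>R fact k < 1"
    by (rule order_tendstoD) simp
  then show ?thesis
    by (auto simp: eventually_sequentially divide_inverse_commute)
qed

lemma picard_step_unique_fixpoint:
  assumes lip: "L-lipschitz_on UNIV g" and N: "0 \<le> N"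
  shows "\<exists>!h. picard_step g z0 N h = h"
proof -
  let ?P = "picard_step g z0 N"
  obtain k where k: "(L * N) ^ k / fact k < 1"
    using exists_power_div_fact_less_one by blast
  have "0 \<le> (L * N) ^ k / fact k"
    using lipschitz_on_nonneg[OF lip] N by simp
  then obtain h where h: "(?P ^^ k) h = h" and unique: "\<And>h'. (?P ^^ k) h' = h' \<Longrightarrow> h' = h"
    using banach_fix_type[OF _ k] dist_picard_step_iterate_le[OF lip N] by metis
  have "(?P ^^ k) (?P h) = ?P h"
    using funpow_swap1[of ?P k h] h by simp
  then have "?P h = h"
    by (rule unique)
  moreover have "h' = h" if "?P h' = h'" for h'
  proof -
    have "(?P ^^ j) h' = h'" for j
      by (induction j) (simp_all add: that)
    then show ?thesis
      by (rule unique)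
  qed
  ultimately show ?thesis
    by blast
qed

definition picard_solution :: "('a::euclidean_space \<Rightarrow> 'a) \<Rightarrow> 'a \<Rightarrow> real \<Rightarrow> (real \<Rightarrow>\<^sub>C 'a)" where
  "picard_solution g z0 N = (THE h. picard_step g z0 N h = h)"

lemma picard_solution_eq:
  assumes lip: "L-lipschitz_on UNIV g" and N: "0 \<le> N"
  shows "picard_solution g z0 N t = picard_integral g z0 (picard_solution g z0 N) (clamp 0 N t)"
proof -
  have "picard_step g z0 N (picard_solution g z0 N) = picard_solution g z0 N"
    unfolding picard_solution_def by (rule theI'[OF picard_step_unique_fixpoint[OF lip N]])
  then show ?thesis
    using picard_step_apply[OF lipschitz_on_continuous_on[OF lip]] by metis
qed

lemma picard_solution_restrict:
  assumes lip: "L-lipschitz_on UNIV g" and N: "0 \<le> N" and "N \<le> M" and t: "t \<in> {0..N}"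
  shows "picard_solution g z0 N t = picard_solution g z0 M t"
proof -
  have M: "0 \<le> M"
    using assms by simp
  have g: "continuous_on UNIV g"
    using lip by (rule lipschitz_on_continuous_on)
  let ?h = "picard_step g z0 N (picard_solution g z0 M)"
  have h: "?h u = picard_solution g z0 M u" if "u \<in> {0..N}" for u
    using that \<open>N \<le> M\<close>
    by (simp add: picard_step_apply[OF g] picard_solution_eq[OF lip M] clamp_real_eq)
  have "picard_step g z0 N ?h = ?h"
  proof (rule bcontfun_eqI)
    fix s
    have c: "clamp 0 N s \<in> {0..N}"
      using clamp_real_in_interval[OF N] .
    have "picard_step g z0 N ?h s = z0 + integral {0..clamp 0 N s} (\<lambda>u. g (picard_solution g z0 M u))"
      unfolding picard_step_apply[OF g, of z0 N ?h] picard_integral_def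
      using c by (intro arg_cong[where f = "\<lambda>u. z0 + u"] integral_cong) (auto simp: h)
    then show "picard_step g z0 N ?h s = ?h s"
      by (simp add: picard_step_apply[OF g] picard_integral_def)
  qed
  then have "?h = picard_solution g z0 N"
    unfolding picard_solution_def
    by (rule the1_equality[OF picard_step_unique_fixpoint[OF lip N], symmetric])
  moreover have "?h t = picard_solution g z0 M t"
    using h t .
  ultimately show ?thesis
    by simp
qed

lemma picard_solution_has_vector_derivative:
  fixes g :: "'a::euclidean_space \<Rightarrow> 'a"
  assumes lip: "L-lipschitz_on UNIV g" and t: "t \<in> {0..N}"
  shows "(picard_solution g z0 N has_vector_derivative g (picard_solution g z0 N t)) (at t within {0..N})"
proof (rule has_vector_derivative_transform_within[OF _ zero_less_one t])
  show "(picard_integral g z0 (picard_solution g z0 N) has_vector_derivative g (picard_solution g z0 N t))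
      (at t within {0..N})"
    by (rule has_vector_derivative_picard_integral[OF lipschitz_on_continuous_on[OF lip] _ t]) simp
  show "picard_integral g z0 (picard_solution g z0 N) s = picard_solution g z0 N s" if "s \<in> {0..N}" for s
    using that picard_solution_eq[OF lip, of N z0 s] by (simp add: clamp_real_eq)
qed

text \<open>The Picard solutions on the intervals [0, t + 1] agree where both are defined, by uniqueness
  of the fixed point, so they glue to a solution on [0, \<infinity>).\<close>
lemma lipschitz_ode_solution_exists:
  fixes g :: "'a::euclidean_space \<Rightarrow> 'a"
  assumes lip: "L-lipschitz_on UNIV g"
  shows "\<exists>\<phi>. ode_solution_on g \<phi> {0..} \<and> \<phi> 0 = z0"
proof -
  define \<phi> where "\<phi> t = picard_solution g z0 (t + 1) t" for t
  have \<phi>_eq: "\<phi> s = picard_solution g z0 N s" if "0 \<le> s" "s \<le> N" for s N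
  proof (cases "s + 1 \<le> N")
    case True
    then show ?thesis
      using picard_solution_restrict[OF lip, of "s + 1" N s] that by (simp add: \<phi>_def)
  next
    case False
    then show ?thesis
      using picard_solution_restrict[OF lip, of N "s + 1" s] that by (simp add: \<phi>_def)
  qed
  have "\<phi> 0 = z0"
    using picard_solution_eq[OF lip, of 1 z0 0] by (simp add: \<phi>_def picard_integral_def)
  moreover have "(\<phi> has_vector_derivative g (\<phi> t)) (at t within {0..})" if t: "t \<in> {0..}" for t
  proof -
    define N where "N = t + 1"
    have tN: "t \<in> {0..N}"
      using t by (simp add: N_def)
    have "at t within {0..N} = at t within {0..}"
      by (rule at_within_nhd[where S = "{..<N}"]) (auto simp: N_def)
    then have "(picard_solution g z0 N has_vector_derivative g (\<phi> t)) (at t within {0..})"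
      using picard_solution_has_vector_derivative[OF lip tN] \<phi>_eq[of t N] tN by simp
    then show ?thesis
      by (rule has_vector_derivative_transform_within[OF _ zero_less_one t])
        (auto simp: N_def dist_real_def intro: \<phi>_eq[symmetric])
  qed
  ultimately show ?thesis
    unfolding ode_solution_on_def by blast
qed

section \<open>Quadratic Lyapunov functions\<close>

lemma ode_solution_on_subset:
  "ode_solution_on f \<phi> I \<Longrightarrow> J \<subseteq> I \<Longrightarrow> ode_solution_on f \<phi> J"
  unfolding ode_solution_on_def by (meson has_vector_derivative_within_subset subsetD)

lemma has_real_derivative_compose_has_derivative:
  fixes V :: "'a::real_normed_vector \<Rightarrow> real"
  assumes "(V has_derivative DV) (at (\<phi> t))" and "(\<phi> has_vector_derivative w) (at t within I)"
  shows "((\<lambda>s. V (\<phi> s)) has_real_derivative DV w) (at t within I)"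
proof -
  have "((\<lambda>s. V (\<phi> s)) has_derivative (\<lambda>h. DV (h *\<^sub>R w))) (at t within I)"
    using assms(2,1) unfolding has_vector_derivative_def by (rule has_derivative_compose)
  moreover have "(\<lambda>h. DV (h *\<^sub>R w)) = (\<lambda>h. DV w * h)"
    using linear_scale[OF has_derivative_linear[OF assms(1)]] by (simp add: fun_eq_iff mult.commute)
  ultimately show ?thesis
    by (simp add: has_field_derivative_def)
qed

lemma lyapunov_weighted_nonincreasing:
  fixes f :: "'a::real_normed_vector \<Rightarrow> 'a"
  assumes V: "\<And>z. (V has_derivative DV z) (at z)"
    and dec: "\<And>z. V z < \<rho> \<Longrightarrow> DV z (f z) \<le> - \<kappa> * V z"
    and sol: "ode_solution_on f \<phi> {0..b}" and "0 \<le> b"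
    and below: "\<And>s. s \<in> {0..<b} \<Longrightarrow> V (\<phi> s) < \<rho>"
  shows "V (\<phi> b) * exp (\<kappa> * b) \<le> V (\<phi> 0)"
proof -
  define W where "W s = V (\<phi> s) * exp (\<kappa> * s)" for s
  define W' where "W' s = (DV (\<phi> s) (f (\<phi> s)) + \<kappa> * V (\<phi> s)) * exp (\<kappa> * s)" for s
  have W: "(W has_real_derivative W' s) (at s within {0..b})" if "s \<in> {0..b}" for s
  proof -
    have "((\<lambda>s. V (\<phi> s)) has_real_derivative DV (\<phi> s) (f (\<phi> s))) (at s within {0..b})"
      using sol that unfolding ode_solution_on_def
      by (blast intro: has_real_derivative_compose_has_derivative[OF V])
    then show ?thesis
      unfolding W_def W'_def by (auto intro!: derivative_eq_intros simp: algebra_simps)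
  qed
  have "W b \<le> W 0"
  proof (rule DERIV_nonpos_imp_decreasing_open[OF \<open>0 \<le> b\<close>])
    fix s assume s: "0 < s" "s < b"
    have "DV (\<phi> s) (f (\<phi> s)) + \<kappa> * V (\<phi> s) \<le> 0"
      using dec[OF below[of s]] s by simp
    then have "W' s \<le> 0"
      unfolding W'_def by (simp add: mult_nonpos_nonneg)
    with W[of s] s show "\<exists>y. DERIV W s :> y \<and> y \<le> 0"
      by (auto simp: at_within_Icc_at)
  next
    show "continuous_on {0..b} W"
      unfolding continuous_on_eq_continuous_within using W DERIV_continuous by blast
  qed
  then show ?thesis
    by (simp add: W_def)
qed

lemma lyapunov_exponential_decay:
  fixes f :: "'a::real_normed_vector \<Rightarrow> 'a"
  assumes V: "\<And>z. (V has_derivative DV z) (at z)" and V_nonneg: "\<And>z. 0 \<le> V z"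
    and dec: "\<And>z. V z < \<rho> \<Longrightarrow> DV z (f z) \<le> - \<kappa> * V z" and "0 \<le> \<kappa>"
    and sol: "ode_solution_on f \<phi> {0..t}" and "0 \<le> t"
    and init: "V (\<phi> 0) < \<rho>"
  shows "V (\<phi> t) \<le> exp (- \<kappa> * t) * V (\<phi> 0)"
proof -
  have decay_upto: "V (\<phi> s) * exp (\<kappa> * s) \<le> V (\<phi> 0)"
    if "s \<in> {0..t}" "\<And>u. u \<in> {0..<s} \<Longrightarrow> V (\<phi> u) < \<rho>" for s
    using that ode_solution_on_subset[OF sol]
    by (intro lyapunov_weighted_nonincreasing[OF V dec]) auto
  \<comment> \<open>At a first time of reaching the level \<rho>, the decay up to that time would be violated.\<close>
  have "V (\<phi> s) < \<rho>" if "s \<in> {0..t}" for s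
  proof (rule ccontr)
    assume "\<not> V (\<phi> s) < \<rho>"
    define S where "S = {0..t} \<inter> (\<lambda>u. V (\<phi> u)) -` {\<rho>..}"
    have "continuous_on {0..t} (\<lambda>u. V (\<phi> u))"
      using sol unfolding ode_solution_on_def continuous_on_eq_continuous_within
      by (blast intro: DERIV_continuous has_real_derivative_compose_has_derivative[OF V])
    then have "closed S"
      unfolding S_def by (intro continuous_closed_preimage) auto
    moreover have "s \<in> S"
      using \<open>\<not> V (\<phi> s) < \<rho>\<close> that by (simp add: S_def)
    moreover have "bdd_below S"
      by (auto simp: S_def bdd_below_def)
    ultimately have first: "Inf S \<in> S"
      using closed_contains_Inf by blast
    then have "V (\<phi> u) < \<rho>" if "u \<in> {0..<Inf S}" for u
      using that cInf_lower[OF _ \<open>bdd_below S\<close>, of u] by (force simp: S_def)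
    then have "V (\<phi> (Inf S)) * exp (\<kappa> * Inf S) \<le> V (\<phi> 0)"
      using first by (intro decay_upto) (auto simp: S_def)
    moreover have "V (\<phi> (Inf S)) \<le> V (\<phi> (Inf S)) * exp (\<kappa> * Inf S)"
      using V_nonneg[of "\<phi> (Inf S)"] \<open>0 \<le> \<kappa>\<close> first by (simp add: S_def mult_le_cancel_left1)
    ultimately show False
      using first init by (simp add: S_def)
  qed
  then have "V (\<phi> t) * exp (\<kappa> * t) \<le> V (\<phi> 0)"
    using \<open>0 \<le> t\<close> by (intro decay_upto) auto
  then show ?thesis
    by (simp add: exp_minus field_simps)
qed

lemma dist_less_of_quadratic_lower_bound:
  assumes "c * (dist z p)\<^sup>2 \<le> w" and "0 < c" "0 < e" "w < c * e\<^sup>2"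
  shows "dist z p < e"
proof -
  have "c * (dist z p)\<^sup>2 < c * e\<^sup>2"
    using assms by linarith
  then have "(dist z p)\<^sup>2 < e\<^sup>2"
    using \<open>0 < c\<close> by simp
  then show ?thesis
    using \<open>0 < e\<close> by (simp add: power_less_imp_less_base)
qed

lemma quadratic_lyapunov_decay:
  fixes f :: "'a::real_normed_vector \<Rightarrow> 'a" and V :: "'a \<Rightarrow> real"
  assumes V: "\<And>z. (V has_derivative DV z) (at z)"
    and lower: "\<And>z. c * (dist z p)\<^sup>2 \<le> V z" and "0 < c"
    and "0 < r" and dec: "\<And>z. dist z p < r \<Longrightarrow> DV z (f z) \<le> - \<kappa> * V z" and "0 \<le> \<kappa>"
    and sol: "ode_solution_on f \<phi> {0..t}" and "0 \<le> t" and init: "V (\<phi> 0) < c * r\<^sup>2"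
  shows "V (\<phi> t) \<le> exp (- \<kappa> * t) * V (\<phi> 0)"
proof (rule lyapunov_exponential_decay[OF V _ _ \<open>0 \<le> \<kappa>\<close> sol \<open>0 \<le> t\<close> init])
  show "0 \<le> V z" for z
    using lower[of z] \<open>0 < c\<close> by (meson order.trans mult_nonneg_nonneg less_imp_le zero_le_power2)
  show "DV z (f z) \<le> - \<kappa> * V z" if "V z < c * r\<^sup>2" for z
    using dist_less_of_quadratic_lower_bound[OF lower[of z] \<open>0 < c\<close> \<open>0 < r\<close> that] by (rule dec)
qed

lemma exists_ball_below_of_continuous:
  fixes V :: "'a::metric_space \<Rightarrow> real"
  assumes "isCont V p" "V p = 0" "0 < e"
  obtains d where "0 < d" "\<And>z. dist z p < d \<Longrightarrow> V z < e"
  using assms unfolding continuous_at_eps_delta dist_real_def by (metis abs_less_iff diff_zero)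

lemma quadratic_lyapunov_stable:
  fixes f :: "'a::real_normed_vector \<Rightarrow> 'a" and V :: "'a \<Rightarrow> real"
  assumes V: "\<And>z. (V has_derivative DV z) (at z)" and "V p = 0"
    and lower: "\<And>z. c * (dist z p)\<^sup>2 \<le> V z" and "0 < c"
    and "0 < r" and dec: "\<And>z. dist z p < r \<Longrightarrow> DV z (f z) \<le> - \<kappa> * V z" and "0 \<le> \<kappa>"
  shows "lyapunov_stable f p"
  unfolding lyapunov_stable_def
proof (intro allI impI)
  fix \<epsilon> :: real
  assume "0 < \<epsilon>"
  then obtain d where "0 < d" and d: "\<And>z. dist z p < d \<Longrightarrow> V z < min (c * r\<^sup>2) (c * \<epsilon>\<^sup>2)"
    using exists_ball_below_of_continuous[OF has_derivative_continuous[OF V] \<open>V p = 0\<close>,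
        of "min (c * r\<^sup>2) (c * \<epsilon>\<^sup>2)"]
      \<open>0 < c\<close> \<open>0 < r\<close> by auto
  have "dist (\<phi> t) p < \<epsilon>"
    if sol: "ode_solution_on f \<phi> {0..<T}" and \<phi>0: "dist (\<phi> 0) p < d" and t: "t \<in> {0..<T}" for \<phi> T t
  proof (rule dist_less_of_quadratic_lower_bound[OF lower \<open>0 < c\<close> \<open>0 < \<epsilon>\<close>])
    have "ode_solution_on f \<phi> {0..t}"
      using sol by (rule ode_solution_on_subset) (use t in auto)
    then have "V (\<phi> t) \<le> exp (- \<kappa> * t) * V (\<phi> 0)"
      using t d[OF \<phi>0] by (intro quadratic_lyapunov_decay[OF V lower \<open>0 < c\<close> \<open>0 < r\<close> dec \<open>0 \<le> \<kappa>\<close>]) auto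
    also have "\<dots> \<le> V (\<phi> 0)"
      using t \<open>0 \<le> \<kappa>\<close> lower[of "\<phi> 0"] \<open>0 < c\<close>
      by (intro mult_left_le_one_le) (auto intro: order.trans[rotated])
    also have "\<dots> < c * \<epsilon>\<^sup>2"
      using d[OF \<phi>0] by simp
    finally show "V (\<phi> t) < c * \<epsilon>\<^sup>2" .
  qed
  with \<open>0 < d\<close> show "\<exists>d>0. \<forall>\<phi> T. ode_solution_on f \<phi> {0..<T} \<and> 0 < T \<and> dist (\<phi> 0) p < d
      \<longrightarrow> (\<forall>t\<in>{0..<T}. dist (\<phi> t) p < \<epsilon>)"
    by blast
qed

lemma lipschitz_on_closest_point_extension:
  fixes f :: "'a::euclidean_space \<Rightarrow> 'b::metric_space"
  assumes "L-lipschitz_on S f" "convex S" "closed S" "S \<noteq> {}"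
  shows "L-lipschitz_on UNIV (\<lambda>z. f (closest_point S z))"
proof -
  have "1-lipschitz_on UNIV (closest_point S)"
    using closest_point_lipschitz[OF assms(2-4)] by (intro lipschitz_onI) auto
  moreover have "L-lipschitz_on (closest_point S ` UNIV) f"
    by (rule lipschitz_on_subset[OF assms(1)]) (use closest_point_in_set[OF assms(3,4)] in blast)
  ultimately show ?thesis
    using lipschitz_on_compose2[of 1 UNIV "closest_point S" L f] by simp
qed

text \<open>Solve for the globally Lipschitz extension g of f beyond the ball. It agrees with f on the ball,
  and its solution never leaves the ball, so it also solves the equation for f.\<close>
lemma quadratic_lyapunov_solution_exists:
  fixes f :: "'a::euclidean_space \<Rightarrow> 'a" and V :: "'a \<Rightarrow> real"
  assumes V: "\<And>z. (V has_derivative DV z) (at z)"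
    and lower: "\<And>z. c * (dist z p)\<^sup>2 \<le> V z" and "0 < c"
    and "0 < r" and dec: "\<And>z. dist z p < r \<Longrightarrow> DV z (f z) \<le> - \<kappa> * V z" and "0 \<le> \<kappa>"
    and lip: "L-lipschitz_on (cball p r) f" and init: "V z0 < c * r\<^sup>2"
  shows "\<exists>\<phi>. ode_solution_on f \<phi> {0..} \<and> \<phi> 0 = z0"
proof -
  define g where "g z = f (closest_point (cball p r) z)" for z
  have g_eq: "g z = f z" if "dist z p < r" for z
    using that by (simp add: g_def closest_point_self dist_commute)
  have "L-lipschitz_on UNIV g"
    unfolding g_def using \<open>0 < r\<close>
    by (intro lipschitz_on_closest_point_extension[OF lip convex_cball closed_cball]) auto
  then obtain \<phi> where \<phi>: "ode_solution_on g \<phi> {0..}" "\<phi> 0 = z0"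
    using lipschitz_ode_solution_exists by blast
  have "dist (\<phi> t) p < r" if "t \<in> {0..}" for t
  proof (rule dist_less_of_quadratic_lower_bound[OF lower \<open>0 < c\<close> \<open>0 < r\<close>])
    have "ode_solution_on g \<phi> {0..t}"
      using \<phi>(1) by (rule ode_solution_on_subset) auto
    then have "V (\<phi> t) \<le> exp (- \<kappa> * t) * V (\<phi> 0)"
      using that \<phi>(2) init dec g_eq
      by (intro quadratic_lyapunov_decay[OF V lower \<open>0 < c\<close> \<open>0 < r\<close> _ \<open>0 \<le> \<kappa>\<close>]) auto
    also have "\<dots> \<le> V (\<phi> 0)"
      using that \<open>0 \<le> \<kappa>\<close> lower[of "\<phi> 0"] \<open>0 < c\<close>
      by (intro mult_left_le_one_le) (auto intro: order.trans[rotated])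
    finally show "V (\<phi> t) < c * r\<^sup>2"
      using init \<phi>(2) by simp
  qed
  then have "ode_solution_on f \<phi> {0..}"
    using \<phi>(1) g_eq unfolding ode_solution_on_def by simp
  with \<phi>(2) show ?thesis
    by blast
qed

lemma exp_decay_tendsto_zero:
  fixes \<kappa> A :: real
  assumes "0 < \<kappa>"
  shows "((\<lambda>t. exp (- \<kappa> * t) * A) \<longlongrightarrow> 0) at_top"
proof -
  have "filterlim (\<lambda>t. - \<kappa> * t) at_bot at_top"
    using filterlim_tendsto_neg_mult_at_bot[OF tendsto_const _ filterlim_ident, of "- \<kappa>"] assms
    by simp
  then have "((\<lambda>t. exp (- \<kappa> * t)) \<longlongrightarrow> 0) at_top"
    by (rule filterlim_compose[OF exp_at_bot])
  then show ?thesis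
    by (rule tendsto_mult_left_zero)
qed

lemma quadratic_lyapunov_tendsto:
  fixes f :: "'a::real_normed_vector \<Rightarrow> 'a" and V :: "'a \<Rightarrow> real"
  assumes V: "\<And>z. (V has_derivative DV z) (at z)"
    and lower: "\<And>z. c * (dist z p)\<^sup>2 \<le> V z" and "0 < c"
    and "0 < r" and dec: "\<And>z. dist z p < r \<Longrightarrow> DV z (f z) \<le> - \<kappa> * V z" and "0 < \<kappa>"
    and sol: "ode_solution_on f \<phi> {0..}" and init: "V (\<phi> 0) < c * r\<^sup>2"
  shows "(\<phi> \<longlongrightarrow> p) at_top"
proof -
  have "\<forall>\<^sub>F t in at_top. c * (dist (\<phi> t) p)\<^sup>2 \<le> exp (- \<kappa> * t) * V (\<phi> 0)"
    using eventually_ge_at_top[of 0]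
  proof eventually_elim
    case (elim t)
    have "ode_solution_on f \<phi> {0..t}"
      using sol by (rule ode_solution_on_subset) auto
    with elim init have "V (\<phi> t) \<le> exp (- \<kappa> * t) * V (\<phi> 0)"
      using \<open>0 < \<kappa>\<close> by (intro quadratic_lyapunov_decay[OF V lower \<open>0 < c\<close> \<open>0 < r\<close> dec]) auto
    then show ?case
      using lower[of "\<phi> t"] by linarith
  qed
  then have lim: "((\<lambda>t. c * (dist (\<phi> t) p)\<^sup>2) \<longlongrightarrow> 0) at_top"
    using \<open>0 < c\<close>
    by (intro tendsto_sandwich[OF _ _ tendsto_const exp_decay_tendsto_zero[OF \<open>0 < \<kappa>\<close>]]) auto
  have "sqrt (c * (dist (\<phi> t) p)\<^sup>2 / c) = dist (\<phi> t) p" for t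
    using \<open>0 < c\<close> by simp
  then have "((\<lambda>t. dist (\<phi> t) p) \<longlongrightarrow> 0) at_top"
    using tendsto_real_sqrt[OF tendsto_divide_zero[OF lim, of c]] by simp
  then show ?thesis
    by (rule tendsto_dist_iff[THEN iffD2])
qed

theorem quadratic_lyapunov_locally_asymptotically_stable:
  fixes f :: "'a::euclidean_space \<Rightarrow> 'a" and V :: "'a \<Rightarrow> real"
  assumes "f p = 0"
    and V: "\<And>z. (V has_derivative DV z) (at z)" and "V p = 0"
    and lower: "\<And>z. c * (dist z p)\<^sup>2 \<le> V z" and "0 < c"
    and "0 < r" and dec: "\<And>z. dist z p < r \<Longrightarrow> DV z (f z) \<le> - \<kappa> * V z" and "0 < \<kappa>"
    and lip: "L-lipschitz_on (cball p r) f"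
  shows "locally_asymptotically_stable f p"
proof -
  obtain \<eta> where "0 < \<eta>" and \<eta>: "\<And>z. dist z p < \<eta> \<Longrightarrow> V z < c * r\<^sup>2"
    using exists_ball_below_of_continuous[OF has_derivative_continuous[OF V] \<open>V p = 0\<close>, of "c * r\<^sup>2"]
      \<open>0 < c\<close> \<open>0 < r\<close> by auto
  have "locally_attractive f p"
    unfolding locally_attractive_def
    using \<eta> \<open>0 < \<eta>\<close> \<open>0 < \<kappa>\<close>
      quadratic_lyapunov_solution_exists[OF V lower \<open>0 < c\<close> \<open>0 < r\<close> dec _ lip]
      quadratic_lyapunov_tendsto[OF V lower \<open>0 < c\<close> \<open>0 < r\<close> dec \<open>0 < \<kappa>\<close>]
    by (metis less_imp_le)
  moreover have "lyapunov_stable f p"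
    using quadratic_lyapunov_stable[OF V \<open>V p = 0\<close> lower \<open>0 < c\<close> \<open>0 < r\<close> dec] \<open>0 < \<kappa>\<close> by simp
  ultimately show ?thesis
    unfolding locally_asymptotically_stable_def using \<open>f p = 0\<close> by blast
qed

lemma dist_triple_power2:
  fixes x y v x' y' v' :: real
  shows "(dist (x, y, v) (x', y', v'))\<^sup>2 = (x - x')\<^sup>2 + (y - y')\<^sup>2 + (v - v')\<^sup>2"
  by (simp add: dist_Pair_Pair dist_real_def)

lemma negative_definite_quadratic_form:
  fixes a c K :: real
  assumes "0 < a" "0 < c" "K\<^sup>2 < 4 * a * c"
  shows "\<exists>m>0. \<forall>X W. - a * X\<^sup>2 + K * X * W - c * W\<^sup>2 \<le> - m * (X\<^sup>2 + W\<^sup>2)"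
proof -
  define m where "m = (4 * a * c - K\<^sup>2) / (4 * (a + c))"
  have "0 < m"
    using assms by (simp add: m_def)
  have m_sum: "4 * m * (a + c) = 4 * a * c - K\<^sup>2"
    using assms by (simp add: m_def field_simps)
  have "m * (a + c) \<le> a * c"
    using m_sum zero_le_power2[of K] by linarith
  also have "\<dots> < a * (a + c)"
    using assms by (simp add: algebra_simps)
  finally have "0 < a - m"
    using assms by simp
  have "K\<^sup>2 \<le> 4 * (a - m) * (c - m)"
    using m_sum by (simp add: algebra_simps power2_eq_square)
  have "- a * X\<^sup>2 + K * X * W - c * W\<^sup>2 \<le> - m * (X\<^sup>2 + W\<^sup>2)" for X W
  proof -
    have "0 \<le> (2 * (a - m) * X - K * W)\<^sup>2 + (4 * (a - m) * (c - m) - K\<^sup>2) * W\<^sup>2"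
      using \<open>K\<^sup>2 \<le> 4 * (a - m) * (c - m)\<close> by simp
    also have "\<dots> = 4 * (a - m) * ((a - m) * X\<^sup>2 - K * X * W + (c - m) * W\<^sup>2)"
      by (simp add: algebra_simps power2_eq_square)
    finally have "0 \<le> (a - m) * X\<^sup>2 - K * X * W + (c - m) * W\<^sup>2"
      using \<open>0 < a - m\<close> by (simp add: zero_le_mult_iff)
    then show ?thesis
      by (simp add: algebra_simps)
  qed
  with \<open>0 < m\<close> show ?thesis
    by blast
qed

lemma cross_term_absorb:
  fixes Q h b m m1 E X W Z :: real
  assumes "Q \<le> - m1 * (X\<^sup>2 + W\<^sup>2)" "0 < m" "m \<le> m1" "m \<le> b" "\<bar>E\<bar> \<le> m" "0 \<le> h"
  shows "Q - h * X\<^sup>2 - b * Z\<^sup>2 + E * X * Z \<le> - (m / 2) * (X\<^sup>2 + W\<^sup>2 + Z\<^sup>2)"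
proof -
  have "2 * (\<bar>X\<bar> * \<bar>Z\<bar>) \<le> X\<^sup>2 + Z\<^sup>2"
    using zero_le_power2[of "\<bar>X\<bar> - \<bar>Z\<bar>"] by (simp add: power2_diff)
  have "E * X * Z \<le> \<bar>E\<bar> * (\<bar>X\<bar> * \<bar>Z\<bar>)"
    by (metis abs_ge_self abs_mult mult.assoc)
  also have "\<dots> \<le> m * (\<bar>X\<bar> * \<bar>Z\<bar>)"
    using assms(5) by (rule mult_right_mono) simp
  also have "\<dots> \<le> m * ((X\<^sup>2 + Z\<^sup>2) / 2)"
    using \<open>2 * (\<bar>X\<bar> * \<bar>Z\<bar>) \<le> X\<^sup>2 + Z\<^sup>2\<close> \<open>0 < m\<close> by (intro mult_left_mono) auto
  finally have "E * X * Z \<le> m * ((X\<^sup>2 + Z\<^sup>2) / 2)" .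
  moreover have "m * X\<^sup>2 \<le> m1 * X\<^sup>2" "m * W\<^sup>2 \<le> m1 * W\<^sup>2" "m * Z\<^sup>2 \<le> b * Z\<^sup>2"
    "0 \<le> h * X\<^sup>2" "0 \<le> m * W\<^sup>2"
    using assms by (simp_all add: mult_right_mono)
  moreover have "Q \<le> - (m1 * X\<^sup>2) - m1 * W\<^sup>2"
    using assms(1) by (simp add: algebra_simps)
  ultimately have "Q - h * X\<^sup>2 - b * Z\<^sup>2 + E * X * Z \<le> - (m * X\<^sup>2) / 2 - (m * W\<^sup>2) / 2 - (m * Z\<^sup>2) / 2"
    by (simp add: algebra_simps)
  then show ?thesis
    by (simp add: algebra_simps)
qed

lemma weighted_squares_lower_bound:
  fixes X Y Z \<alpha> \<beta> :: real
  assumes "0 < \<alpha>" "0 < \<beta>"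
  shows "min 1 (min \<alpha> \<beta>) / 3 * (X\<^sup>2 + Y\<^sup>2 + Z\<^sup>2) \<le> X\<^sup>2 + \<alpha> * (X + Y)\<^sup>2 + \<beta> * Z\<^sup>2"
proof -
  define \<mu> where "\<mu> = min 1 (min \<alpha> \<beta>)"
  have \<mu>: "0 < \<mu>" "\<mu> \<le> 1" "\<mu> \<le> \<alpha>" "\<mu> \<le> \<beta>"
    using assms by (auto simp: \<mu>_def)
  have "Y\<^sup>2 \<le> 2 * (X + Y)\<^sup>2 + 2 * X\<^sup>2"
    using zero_le_power2[of "2 * X + Y"] by (simp add: power2_eq_square algebra_simps)
  then have "X\<^sup>2 + Y\<^sup>2 + Z\<^sup>2 \<le> 3 * X\<^sup>2 + 3 * (X + Y)\<^sup>2 + 3 * Z\<^sup>2"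
    using zero_le_power2[of "X + Y"] zero_le_power2[of Z] by linarith
  then have "\<mu> / 3 * (X\<^sup>2 + Y\<^sup>2 + Z\<^sup>2) \<le> \<mu> * (X\<^sup>2 + (X + Y)\<^sup>2 + Z\<^sup>2)"
    using \<mu>(1) by (simp add: mult_left_mono)
  also have "\<dots> \<le> X\<^sup>2 + \<alpha> * (X + Y)\<^sup>2 + \<beta> * Z\<^sup>2"
    using \<mu> by (simp add: distrib_left add_mono mult_right_mono mult_left_le_one_le)
  finally show ?thesis
    by (simp add: \<mu>_def)
qed

lemma lipschitz_on_fst: "1-lipschitz_on U fst"
  by (rule lipschitz_onI) (simp_all add: dist_fst_le)

lemma lipschitz_on_snd: "1-lipschitz_on U snd"
  by (rule lipschitz_onI) (simp_all add: dist_snd_le)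

lemma lipschitz_on_mult_compact:
  fixes f g :: "'a::metric_space \<Rightarrow> 'b::real_normed_algebra"
  assumes "compact U" and f: "C-lipschitz_on U f" and g: "D-lipschitz_on U g"
  shows "\<exists>L. L-lipschitz_on U (\<lambda>x. f x * g x)"
proof -
  have "bounded (f ` U)" "bounded (g ` U)"
    using compact_continuous_image[OF lipschitz_on_continuous_on \<open>compact U\<close>, THEN compact_imp_bounded]
      f g
    by blast+
  then obtain A B where "0 < A" "0 < B" and A: "\<And>x. x \<in> U \<Longrightarrow> norm (f x) \<le> A"
    and B: "\<And>x. x \<in> U \<Longrightarrow> norm (g x) \<le> B"
    unfolding bounded_pos by auto
  have "(A * D + B * C)-lipschitz_on U (\<lambda>x. f x * g x)"
  proof (rule lipschitz_onI)
    fix x y assume xy: "x \<in> U" "y \<in> U"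
    have "dist (f x * g x) (f y * g y) = norm (f x * (g x - g y) + (f x - f y) * g y)"
      by (simp add: dist_norm algebra_simps)
    also have "\<dots> \<le> norm (f x) * norm (g x - g y) + norm (f x - f y) * norm (g y)"
      by (intro norm_triangle_le add_mono norm_mult_ineq)
    also have "\<dots> \<le> A * (D * dist x y) + (C * dist x y) * B"
      using lipschitz_onD[OF f xy] lipschitz_onD[OF g xy] A[OF xy(1)] B[OF xy(2)]
        lipschitz_on_nonneg[OF f] lipschitz_on_nonneg[OF g] \<open>0 < A\<close>
      by (intro add_mono mult_mono) (auto simp: dist_norm)
    finally show "dist (f x * g x) (f y * g y) \<le> (A * D + B * C) * dist x y"
      by (simp add: algebra_simps)
  qed (use \<open>0 < A\<close> \<open>0 < B\<close> lipschitz_on_nonneg[OF f] lipschitz_on_nonneg[OF g] in simp)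
  then show ?thesis ..
qed

section \<open>The quasi-steady-state HIV-1 transcription model\<close>

definition hill :: "real \<Rightarrow> real \<Rightarrow> real \<Rightarrow> nat \<Rightarrow> real \<Rightarrow> real" where
  "hill b c d n v = b * (1 + c * v ^ n) / (1 + d * v ^ n)"

lemma hiv_field_eq:
  "hiv_field a1 a3 a4 a5 a6 a7 a8 a9 a10 a11 n =
     (\<lambda>z. (a1 + (a4 - a1) * fst (snd z) - (a3 + hill a9 a10 a11 n (snd (snd z))) * fst z,
           hill a9 a10 a11 n (snd (snd z)) * fst z - a4 * fst (snd z),
           a5 * (a7 / a8) * fst z - a6 * snd (snd z)))"
  by (auto simp: fun_eq_iff hiv_field_def hill_def Let_def split: prod.split)

text \<open>The divided difference of the Hill function, written so that it is visibly continuous.\<close>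
definition hill_slope :: "real \<Rightarrow> real \<Rightarrow> real \<Rightarrow> nat \<Rightarrow> real \<Rightarrow> real \<Rightarrow> real" where
  "hill_slope b c d n u v =
     b * (c - d) * (\<Sum>i<n. v ^ (n - Suc i) * u ^ i) / ((1 + d * u ^ n) * (1 + d * v ^ n))"

lemma hill_diff:
  assumes "0 \<le> u" "0 \<le> v" "0 \<le> d"
  shows "hill b c d n u - hill b c d n v = hill_slope b c d n u v * (u - v)"
proof -
  have "0 < 1 + d * u ^ n" "0 < 1 + d * v ^ n"
    using assms by (simp_all add: add_pos_nonneg)
  then have "hill b c d n u - hill b c d n v
      = b * (c - d) * (u ^ n - v ^ n) / ((1 + d * u ^ n) * (1 + d * v ^ n))"
    unfolding hill_def by (simp add: field_simps)
  then show ?thesis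
    unfolding hill_slope_def power_diff_sumr2 by (simp add: field_simps)
qed

lemma hill_slope_pos:
  assumes "0 < v" "0 < b" "d < c" "0 \<le> d" "1 \<le> n"
  shows "0 < hill_slope b c d n v v"
proof -
  have "0 < (\<Sum>i<n. v ^ (n - Suc i) * v ^ i)"
    using assms by (intro sum_pos) (auto simp: lessThan_empty_iff)
  moreover have "0 < 1 + d * v ^ n"
    using assms by (simp add: add_pos_nonneg)
  ultimately show ?thesis
    unfolding hill_slope_def using assms by simp
qed

lemma isCont_hill_slope:
  assumes "0 \<le> v" "0 \<le> d"
  shows "isCont (\<lambda>u. hill_slope b c d n u v) v"
proof -
  have "0 < 1 + d * v ^ n"
    using assms by (simp add: add_pos_nonneg)
  then show ?thesis
    unfolding hill_slope_def by (intro continuous_intros) auto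
qed

lemma abs_hill_slope_le:
  assumes "u \<in> {0..M}" "v \<in> {0..M}" "0 \<le> d"
  shows "\<bar>hill_slope b c d n u v\<bar> \<le> \<bar>b * (c - d)\<bar> * (n * M ^ (n - 1))"
proof -
  define S where "S = (\<Sum>i<n. v ^ (n - Suc i) * u ^ i)"
  have pos: "1 \<le> 1 + d * u ^ n" "1 \<le> 1 + d * v ^ n"
    using assms by simp_all
  then have den: "1 \<le> (1 + d * u ^ n) * (1 + d * v ^ n)"
    using mult_mono[of 1 "1 + d * u ^ n" 1 "1 + d * v ^ n"] by simp
  have "0 \<le> S"
    using assms unfolding S_def by (intro sum_nonneg) auto
  have "S \<le> (\<Sum>i<n. M ^ (n - Suc i) * M ^ i)"
    using assms unfolding S_def by (intro sum_mono mult_mono power_mono) auto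
  also have "\<dots> = (\<Sum>i<n. M ^ (n - 1))"
    by (intro sum.cong refl) (simp add: power_add[symmetric])
  finally have "S \<le> n * M ^ (n - 1)"
    by simp
  have "\<bar>hill_slope b c d n u v\<bar> = \<bar>b * (c - d)\<bar> * S / ((1 + d * u ^ n) * (1 + d * v ^ n))"
    unfolding hill_slope_def S_def[symmetric] using pos \<open>0 \<le> S\<close> by (simp add: abs_mult)
  also have "\<dots> \<le> \<bar>b * (c - d)\<bar> * S"
    using den \<open>0 \<le> S\<close> by (intro divide_left_mono[of 1, simplified]) auto
  also have "\<dots> \<le> \<bar>b * (c - d)\<bar> * (n * M ^ (n - 1))"
    using \<open>S \<le> n * M ^ (n - 1)\<close> by (rule mult_left_mono) simp
  finally show ?thesis .
qed

lemma hill_lipschitz_on: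
  assumes "0 \<le> d" "0 \<le> M"
  shows "(\<bar>b * (c - d)\<bar> * (n * M ^ (n - 1)))-lipschitz_on {0..M} (hill b c d n)"
proof (rule lipschitz_onI)
  fix u v assume "u \<in> {0..M}" "v \<in> {0..M}"
  then show "dist (hill b c d n u) (hill b c d n v) \<le> \<bar>b * (c - d)\<bar> * (n * M ^ (n - 1)) * dist u v"
    using abs_hill_slope_le[of u M v d b c n] assms
    by (auto simp: dist_real_def hill_diff abs_mult intro!: mult_right_mono)
qed (use assms in simp)

lemma hiv_field_lipschitz_on:
  assumes "compact S" and nonneg: "\<And>z. z \<in> S \<Longrightarrow> 0 \<le> snd (snd z)" and "0 \<le> a11"
  shows "\<exists>L. L-lipschitz_on S (hiv_field a1 a3 a4 a5 a6 a7 a8 a9 a10 a11 n)"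
proof -
  let ?H = "\<lambda>z. hill a9 a10 a11 n (snd (snd z))"
  obtain M where "0 < M" and M: "\<And>z. z \<in> S \<Longrightarrow> norm z \<le> M"
    using compact_imp_bounded[OF \<open>compact S\<close>] unfolding bounded_pos by auto
  have "snd (snd z) \<le> M" if "z \<in> S" for z
    using norm_snd_le[of "snd (snd z)" "fst (snd z)"] norm_snd_le[of "snd z" "fst z"] M[OF that]
      abs_ge_self[of "snd (snd z)"] by simp
  then have "(\<lambda>z. snd (snd z)) ` S \<subseteq> {0..M}"
    using nonneg by auto
  then have "(\<bar>a9 * (a10 - a11)\<bar> * (n * M ^ (n - 1)))-lipschitz_on ((\<lambda>z. snd (snd z)) ` S)
      (hill a9 a10 a11 n)"
    using \<open>0 < M\<close> by (intro lipschitz_on_subset[OF hill_lipschitz_on[OF \<open>0 \<le> a11\<close>]]) auto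
  then have H: "(\<bar>a9 * (a10 - a11)\<bar> * (n * M ^ (n - 1)) * (1 * 1))-lipschitz_on S ?H"
    by (intro lipschitz_on_compose2[OF lipschitz_on_compose2[OF lipschitz_on_snd lipschitz_on_snd]])
  have x: "1-lipschitz_on S fst" and y: "(1 * 1)-lipschitz_on S (\<lambda>z. fst (snd z))"
    and v: "(1 * 1)-lipschitz_on S (\<lambda>z. snd (snd z))"
    by (intro lipschitz_on_fst lipschitz_on_compose2[OF lipschitz_on_snd] lipschitz_on_snd)+
  obtain L where Hx: "L-lipschitz_on S (\<lambda>z. ?H z * fst z)"
    using lipschitz_on_mult_compact[OF \<open>compact S\<close> H x] by blast
  have "hiv_field a1 a3 a4 a5 a6 a7 a8 a9 a10 a11 n =
      (\<lambda>z. (a1 + (a4 - a1) * fst (snd z) - a3 * fst z - ?H z * fst z,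
             ?H z * fst z - a4 * fst (snd z), a5 * (a7 / a8) * fst z - a6 * snd (snd z)))"
    unfolding hiv_field_eq by (simp add: fun_eq_iff algebra_simps)
  moreover have "\<exists>L. L-lipschitz_on S \<dots>"
    by (rule exI lipschitz_on_Pair lipschitz_on_add lipschitz_on_diff lipschitz_on_cmult_real
        lipschitz_on_constant x y v Hx)+
  ultimately show ?thesis
    by simp
qed

lemma hiv_weight_exists:
  fixes a1 a3 a4 :: real
  assumes "0 < a1" "a1 < a3" "0 < a4"
  shows "\<exists>\<alpha>>0. \<exists>m>0. \<forall>X W. - (a4 + a3 - a1) * X\<^sup>2 + (a4 - a1 - \<alpha> * (a3 - a1)) * X * W
           - \<alpha> * a1 * W\<^sup>2 \<le> - m * (X\<^sup>2 + W\<^sup>2)"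
proof -
  define k where "k = a3 - a1"
  define A where "A = a4 + a3 - a1"
  text \<open>With this \<alpha> the cross coefficient a4 - a1 - \<alpha> k becomes -2 A a1 / k, and the
    discriminant 4 A \<alpha> a1 - (a4 - a1 - \<alpha> k)^2 becomes 4 A a1 a4 a3 / k^2 > 0.\<close>
  define \<alpha> where "\<alpha> = (2 * A * a1 + (a4 - a1) * k) / k\<^sup>2"
  have "0 < k" "0 < A"
    using assms by (simp_all add: k_def A_def)
  have "2 * A * a1 + (a4 - a1) * k = 2 * a4 * a1 + a1 * k + a4 * k"
    by (simp add: A_def k_def algebra_simps)
  then have "0 < \<alpha>"
    unfolding \<alpha>_def using assms \<open>0 < k\<close> by (simp add: add_pos_pos)
  have K: "a4 - a1 - \<alpha> * k = - 2 * A * a1 / k"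
    using \<open>0 < k\<close> by (simp add: \<alpha>_def power2_eq_square field_simps)
  have "4 * A * (\<alpha> * a1) - (a4 - a1 - \<alpha> * k)\<^sup>2 = 4 * A * a1 * (A * a1 + (a4 - a1) * k) / k\<^sup>2"
    unfolding K using \<open>0 < k\<close> by (simp add: \<alpha>_def power2_eq_square field_simps)
  also have "A * a1 + (a4 - a1) * k = a4 * a3"
    by (simp add: A_def k_def algebra_simps)
  finally have "(a4 - a1 - \<alpha> * k)\<^sup>2 < 4 * A * (\<alpha> * a1)"
    using assms \<open>0 < A\<close> \<open>0 < k\<close> by (smt (verit) divide_pos_pos mult_pos_pos zero_less_power)
  then obtain m where "0 < m"
    and m: "\<And>X W. - A * X\<^sup>2 + (a4 - a1 - \<alpha> * k) * X * W - (\<alpha> * a1) * W\<^sup>2 \<le> - m * (X\<^sup>2 + W\<^sup>2)"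
    using negative_definite_quadratic_form[OF \<open>0 < A\<close> mult_pos_pos[OF \<open>0 < \<alpha>\<close> \<open>0 < a1\<close>]]
    by blast
  with \<open>0 < \<alpha>\<close> show ?thesis
    unfolding A_def k_def by blast
qed

text \<open>The middle term uses x + y because (x + y)' = a1 - a1 y - a3 x along solutions does not
  involve v.\<close>
definition hiv_lyapunov :: "real \<Rightarrow> real \<Rightarrow> real \<times> real \<times> real \<Rightarrow> real \<times> real \<times> real \<Rightarrow> real" where
  "hiv_lyapunov \<alpha> \<beta> p z =
     (fst z - fst p)\<^sup>2 + \<alpha> * (fst z - fst p + (fst (snd z) - fst (snd p)))\<^sup>2
     + \<beta> * (snd (snd z) - snd (snd p))\<^sup>2"

definition hiv_lyapunov_deriv ::
  "real \<Rightarrow> real \<Rightarrow> real \<times> real \<times> real \<Rightarrow> real \<times> real \<times> real \<Rightarrow> real \<times> real \<times> real \<Rightarrow> real" where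
  "hiv_lyapunov_deriv \<alpha> \<beta> p z w =
     2 * (fst z - fst p) * fst w
     + 2 * \<alpha> * (fst z - fst p + (fst (snd z) - fst (snd p))) * (fst w + fst (snd w))
     + 2 * \<beta> * (snd (snd z) - snd (snd p)) * snd (snd w)"

lemma hiv_lyapunov_has_derivative:
  "(hiv_lyapunov \<alpha> \<beta> p has_derivative hiv_lyapunov_deriv \<alpha> \<beta> p z) (at z)"
proof -
  have "((\<lambda>z. hiv_lyapunov \<alpha> \<beta> p z) has_derivative hiv_lyapunov_deriv \<alpha> \<beta> p z) (at z)"
    unfolding hiv_lyapunov_def hiv_lyapunov_deriv_def
    by (auto intro!: derivative_eq_intros simp: fun_eq_iff algebra_simps)
  then show ?thesis
    by simp
qed

lemma hiv_lyapunov_lower_bound: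
  assumes "0 < \<alpha>" "0 < \<beta>"
  shows "min 1 (min \<alpha> \<beta>) / 3 * (dist z p)\<^sup>2 \<le> hiv_lyapunov \<alpha> \<beta> p z"
  using weighted_squares_lower_bound[OF assms]
  by (cases z; cases p) (simp add: dist_triple_power2 hiv_lyapunov_def)

lemma hiv_lyapunov_deriv_field:
  assumes eq: "hiv_field a1 a3 a4 a5 a6 a7 a8 a9 a10 a11 n (xs, ys, vs) = (0, 0, 0)"
    and "0 \<le> v" "0 \<le> vs" "0 \<le> a11"
  shows "hiv_lyapunov_deriv \<alpha> \<beta> (xs, ys, vs) (x, y, v)
      (hiv_field a1 a3 a4 a5 a6 a7 a8 a9 a10 a11 n (x, y, v))
    = 2 * (- (a4 + a3 - a1) * (x - xs)\<^sup>2 + (a4 - a1 - \<alpha> * (a3 - a1)) * (x - xs) * (x - xs + (y - ys))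
           - \<alpha> * a1 * (x - xs + (y - ys))\<^sup>2 - hill a9 a10 a11 n v * (x - xs)\<^sup>2 - \<beta> * a6 * (v - vs)\<^sup>2
           + (\<beta> * (a5 * (a7 / a8)) - xs * hill_slope a9 a10 a11 n v vs) * (x - xs) * (v - vs))"
proof -
  let ?h = "hill a9 a10 a11 n" and ?c = "a5 * (a7 / a8)"
  have "a1 + (a4 - a1) * ys - (a3 + ?h vs) * xs = 0" "?h vs * xs - a4 * ys = 0" "?c * xs - a6 * vs = 0"
    using eq by (simp_all add: hiv_field_eq)
  moreover have "?h v - ?h vs = hill_slope a9 a10 a11 n v vs * (v - vs)"
    using assms by (intro hill_diff)
  ultimately show ?thesis
    unfolding hiv_lyapunov_deriv_def hiv_field_eq by (simp add: power2_eq_square) algebra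
qed

lemma hiv_lyapunov_deriv_le:
  assumes eq: "hiv_field a1 a3 a4 a5 a6 a7 a8 a9 a10 a11 n (xs, ys, vs) = (0, 0, 0)"
    and "0 < xs" "0 \<le> vs" "0 \<le> v" "0 \<le> a9" "0 \<le> a10" "0 \<le> a11" "0 < \<alpha>" "0 < \<beta>"
    and form: "\<And>X W. - (a4 + a3 - a1) * X\<^sup>2 + (a4 - a1 - \<alpha> * (a3 - a1)) * X * W - \<alpha> * a1 * W\<^sup>2
      \<le> - m1 * (X\<^sup>2 + W\<^sup>2)"
    and cancel: "\<beta> * (a5 * (a7 / a8)) = xs * hill_slope a9 a10 a11 n vs vs"
    and "0 < m" "m \<le> m1" "m \<le> \<beta> * a6"
    and close: "xs * \<bar>hill_slope a9 a10 a11 n v vs - hill_slope a9 a10 a11 n vs vs\<bar> \<le> m"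
  shows "hiv_lyapunov_deriv \<alpha> \<beta> (xs, ys, vs) (x, y, v)
      (hiv_field a1 a3 a4 a5 a6 a7 a8 a9 a10 a11 n (x, y, v))
    \<le> - (m / (1 + \<alpha> + \<beta>)) * hiv_lyapunov \<alpha> \<beta> (xs, ys, vs) (x, y, v)"
proof -
  define X where "X = x - xs"
  define W where "W = x - xs + (y - ys)"
  define Z where "Z = v - vs"
  define E where "E = \<beta> * (a5 * (a7 / a8)) - xs * hill_slope a9 a10 a11 n v vs"
  have "E = xs * (hill_slope a9 a10 a11 n vs vs - hill_slope a9 a10 a11 n v vs)"
    unfolding E_def cancel by (simp add: right_diff_distrib)
  then have "\<bar>E\<bar> \<le> m"
    using close \<open>0 < xs\<close> by (simp add: abs_mult abs_minus_commute)
  moreover have "0 \<le> hill a9 a10 a11 n v"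
    using assms by (simp add: hill_def)
  ultimately have "\<bar>E\<bar> \<le> m" "0 \<le> hill a9 a10 a11 n v"
    by blast+
  have "hiv_lyapunov_deriv \<alpha> \<beta> (xs, ys, vs) (x, y, v)
      (hiv_field a1 a3 a4 a5 a6 a7 a8 a9 a10 a11 n (x, y, v))
      = 2 * ((- (a4 + a3 - a1) * X\<^sup>2 + (a4 - a1 - \<alpha> * (a3 - a1)) * X * W - \<alpha> * a1 * W\<^sup>2)
          - hill a9 a10 a11 n v * X\<^sup>2 - \<beta> * a6 * Z\<^sup>2 + E * X * Z)"
    unfolding hiv_lyapunov_deriv_field[OF eq \<open>0 \<le> v\<close> \<open>0 \<le> vs\<close> \<open>0 \<le> a11\<close>]
    by (simp add: X_def W_def Z_def E_def)
  also have "\<dots> \<le> 2 * (- (m / 2) * (X\<^sup>2 + W\<^sup>2 + Z\<^sup>2))"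
    by (rule mult_left_mono[OF cross_term_absorb[OF form \<open>0 < m\<close> \<open>m \<le> m1\<close> \<open>m \<le> \<beta> * a6\<close>
          \<open>\<bar>E\<bar> \<le> m\<close> \<open>0 \<le> hill a9 a10 a11 n v\<close>]]) simp
  also have "\<dots> \<le> - (m / (1 + \<alpha> + \<beta>)) * hiv_lyapunov \<alpha> \<beta> (xs, ys, vs) (x, y, v)"
  proof -
    have "hiv_lyapunov \<alpha> \<beta> (xs, ys, vs) (x, y, v) \<le> (1 + \<alpha> + \<beta>) * (X\<^sup>2 + W\<^sup>2 + Z\<^sup>2)"
      using \<open>0 < \<alpha>\<close> \<open>0 < \<beta>\<close> by (simp add: hiv_lyapunov_def X_def W_def Z_def algebra_simps)
    then have "m / (1 + \<alpha> + \<beta>) * hiv_lyapunov \<alpha> \<beta> (xs, ys, vs) (x, y, v)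
        \<le> m / (1 + \<alpha> + \<beta>) * ((1 + \<alpha> + \<beta>) * (X\<^sup>2 + W\<^sup>2 + Z\<^sup>2))"
      using \<open>0 < m\<close> \<open>0 < \<alpha>\<close> \<open>0 < \<beta>\<close> by (intro mult_left_mono) auto
    also have "\<dots> = m * (X\<^sup>2 + W\<^sup>2 + Z\<^sup>2)"
      using \<open>0 < \<alpha>\<close> \<open>0 < \<beta>\<close> by simp
    finally show ?thesis
      by simp
  qed
  finally show ?thesis .
qed

lemma hiv_field_locally_asymptotically_stable:
  fixes a1 a3 a4 a5 a6 a7 a8 a9 a10 a11 xs ys vs :: real and n :: nat
  assumes "0 < a1" "a1 < a3" "0 < a4" "0 < a5" "0 < a6" "0 < a7" "0 < a8" "0 < a9" "0 < a11"
    and "a11 < a10" "1 \<le> n" "0 < xs" "0 < vs"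
    and eq: "hiv_field a1 a3 a4 a5 a6 a7 a8 a9 a10 a11 n (xs, ys, vs) = (0, 0, 0)"
  shows "locally_asymptotically_stable (hiv_field a1 a3 a4 a5 a6 a7 a8 a9 a10 a11 n) (xs, ys, vs)"
proof -
  let ?f = "hiv_field a1 a3 a4 a5 a6 a7 a8 a9 a10 a11 n"
  define p where "p = (xs, ys, vs)"
  define G where "G v = hill_slope a9 a10 a11 n v vs" for v
  obtain \<alpha> m1 where "0 < \<alpha>" "0 < m1" and form: "\<And>X W. - (a4 + a3 - a1) * X\<^sup>2
      + (a4 - a1 - \<alpha> * (a3 - a1)) * X * W - \<alpha> * a1 * W\<^sup>2 \<le> - m1 * (X\<^sup>2 + W\<^sup>2)"
    using hiv_weight_exists[of a1 a3 a4] assms by blast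
  text \<open>\<beta> cancels the (x - xs) (v - vs) term of the derivative at v = vs; near the equilibrium
    what remains of it is absorbed by the negative definite part.\<close>
  define \<beta> where "\<beta> = xs * G vs / (a5 * (a7 / a8))"
  have "0 < \<beta>"
    using assms by (simp add: \<beta>_def G_def hill_slope_pos)
  define m where "m = min m1 (\<beta> * a6)"
  have "0 < m" "m \<le> m1" "m \<le> \<beta> * a6"
    using \<open>0 < m1\<close> \<open>0 < \<beta>\<close> \<open>0 < a6\<close> by (simp_all add: m_def)
  have "isCont G vs"
    unfolding G_def using assms by (intro isCont_hill_slope) auto
  moreover have "0 < m / xs"
    using \<open>0 < m\<close> \<open>0 < xs\<close> by simp
  ultimately obtain r1 where "0 < r1" and r1: "\<And>v. \<bar>v - vs\<bar> < r1 \<Longrightarrow> \<bar>G v - G vs\<bar> < m / xs"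
    unfolding continuous_at_eps_delta dist_real_def by blast
  define r where "r = min r1 vs"
  have "0 < r"
    using \<open>0 < r1\<close> \<open>0 < vs\<close> by (simp add: r_def)
  have v_close: "\<bar>snd (snd z) - vs\<bar> \<le> dist z p" for z
    using dist_snd_le[of z p] dist_snd_le[of "snd z" "snd p"] by (simp add: p_def dist_real_def)
  have "0 \<le> snd (snd z)" if "z \<in> cball p r" for z
    using v_close[of z] that by (auto simp: r_def dist_commute)
  then obtain L where L: "L-lipschitz_on (cball p r) ?f"
    using hiv_field_lipschitz_on[OF compact_cball] \<open>0 < a11\<close> by (metis less_imp_le)
  have decay: "hiv_lyapunov_deriv \<alpha> \<beta> p z (?f z) \<le> - (m / (1 + \<alpha> + \<beta>)) * hiv_lyapunov \<alpha> \<beta> p z"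
    if "dist z p < r" for z
  proof -
    obtain x y v where z: "z = (x, y, v)"
      by (cases z) auto
    have "\<bar>v - vs\<bar> < r"
      using v_close[of z] that by (simp add: z)
    then have "0 \<le> v" "xs * \<bar>G v - G vs\<bar> \<le> m"
      using r1[of v] \<open>0 < xs\<close> by (auto simp: r_def field_simps)
    then show ?thesis
      unfolding z p_def G_def
      using assms \<open>0 < \<alpha>\<close> \<open>0 < \<beta>\<close> \<open>0 < m\<close> \<open>m \<le> m1\<close> \<open>m \<le> \<beta> * a6\<close>
      by (intro hiv_lyapunov_deriv_le[OF eq _ _ _ _ _ _ _ _ form]) (auto simp: \<beta>_def G_def)
  qed
  show ?thesis
    unfolding p_def[symmetric]
  proof (rule quadratic_lyapunov_locally_asymptotically_stable[OF _ hiv_lyapunov_has_derivative _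
        hiv_lyapunov_lower_bound[OF \<open>0 < \<alpha>\<close> \<open>0 < \<beta>\<close>] _ \<open>0 < r\<close> decay _ L])
    show "?f p = 0" "hiv_lyapunov \<alpha> \<beta> p p = 0"
      using eq by (simp_all add: p_def zero_prod_def hiv_lyapunov_def)
    show "0 < min 1 (min \<alpha> \<beta>) / 3" "0 < m / (1 + \<alpha> + \<beta>)"
      using \<open>0 < \<alpha>\<close> \<open>0 < \<beta>\<close> \<open>0 < m\<close> by simp_all
  qed
qed

theorem mainTheorem6:
  fixes kON kOFF kI \<alpha>p1 \<alpha>p2 \<gamma>p1 \<gamma>m2 \<alpha>m2I \<beta>m2A Tc vb :: real
    and n :: nat and xs ys vs :: real
  assumes "kON > 0" "kOFF > 0" "kI > 0" "\<alpha>p1 > 0" "\<alpha>p2 > 0" "\<gamma>p1 > 0" "\<gamma>m2 > 0"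
    and "\<alpha>m2I > 0" "\<beta>m2A > 0" "Tc > 0" "vb > 1" "n \<ge> 1"
    and "xs > 0" "ys > 0" "vs > 0"
    and "hiv_field kON (kON + kOFF) kI \<alpha>p1 \<gamma>p1 \<alpha>m2I (\<gamma>m2 + \<alpha>p1 + \<alpha>p2) (\<beta>m2A / vb)
           (vb / Tc ^ n) (1 / Tc ^ n) n (xs, ys, vs) = (0, 0, 0)"
  shows "locally_asymptotically_stable
           (hiv_field kON (kON + kOFF) kI \<alpha>p1 \<gamma>p1 \<alpha>m2I (\<gamma>m2 + \<alpha>p1 + \<alpha>p2) (\<beta>m2A / vb)
              (vb / Tc ^ n) (1 / Tc ^ n) n) (xs, ys, vs)"
proof (rule hiv_field_locally_asymptotically_stable)
  have "0 < Tc ^ n"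
    using \<open>Tc > 0\<close> by simp
  then show "0 < 1 / Tc ^ n" "1 / Tc ^ n < vb / Tc ^ n"
    using \<open>vb > 1\<close> by (simp_all add: divide_strict_right_mono)
qed (use assms in simp_all)

end
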